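(* Assume that $(s,p)$ satisfies either (i) $s>-\frac1p$, $p>1$, or (ii) $s\ge-1$, $p=1$. Then for each integer $n\ge2$, every $t\in\mathbb{R}$ and all $v,\tilde v\in\mathcal{F}L_0^{s,p}(\mathbb{T})$, $$\|\mathcal{N}^n(t)(v)\|_{\mathcal{F}L_0^{s,p}}\le C_s(n)\frac{Z_{s,p}^{n-1}}{2^{n-1}(n-1)!}\|v\|_{\mathcal{F}L_0^{s,p}}^n$$ and $$\|\mathcal{N}^n(t)(v)-\mathcal{N}^n(t)(\tilde v)\|_{\mathcal{F}L_0^{s,p}}\le C_s(n)\frac{nZ_{s,p}^{n-1}}{2^{n-1}(n-1)!}\big(\|v\|_{\mathcal{F}L_0^{s,p}}+\|\tilde v\|_{\mathcal{F}L_0^{s,p}}\big)^{n-1}\|v-\tilde v\|_{\mathcal{F}L_0^{s,p}},$$ where $C_s(n)=1$ if $s\le0$ and $C_s(n)=n^s$ if $s>0$.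
   Context: For $f$ on $\mathbb{T}=\mathbb{R}/(2\pi\mathbb{Z})$, $f_k=\frac1{2\pi}\int_{\mathbb{T}}f(x)e^{-ikx}dx$; $\mathbb{Z}_0=\mathbb{Z}\setminus\{0\}$; $\mathcal{F}L_0^{s,p}(\mathbb{T})$ is the space of mean-zero functions with norm $\||k|^sf_k\|_{\ell^p(\mathbb{Z}_0)}$. For $s>-\frac1p$, $p\ge1$, $Z_{s,p}=\||k|^{-(s+1)}\|_{\ell^{p'}(\mathbb{Z}_0)}=[2\zeta((s+1)p')]^{1/p'}$ with $\frac1p+\frac1{p'}=1$ and $\zeta$ the Riemann zeta function; for $p=1$ and $s\ge-1$, $Z_{s,1}=1$. For ${\bf k}=(k_1,\dots,k_n)\in\mathbb{Z}_0^n$ let $|{\bf k}|_n=\sum k_j$ and $\Phi_n({\bf k})=\sum_{1\le i<j\le n}2k_ik_j$. For mean-zero $w$, $\mathcal{N}^n(t)(w)$ is the mean-zero function with Fourier coefficients $\mathcal{N}^n_k(t)(w)=\frac{(-1)^nk}{2^{n-1}n!}\sum_{{\bf k}\in\mathbb{Z}_0^n,\,|{\bf k}|_n=k}e^{i\Phi_n({\bf k})t}\prod_{j=1}^n\frac{w_{k_j}}{k_j}$, $k\in\mathbb{Z}_0$. *)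

theory Defs
  imports "HOL-Analysis.Analysis"
begin

text \<open>Mean-zero (generalised) functions on the torus are represented by their
Fourier coefficient sequences w :: int => complex, with w 0 = 0.\<close>

definition Zset :: "int set" where
  "Zset = {k. k \<noteq> 0}"

definition in_FL0 :: "real \<Rightarrow> real \<Rightarrow> (int \<Rightarrow> complex) \<Rightarrow> bool" where
  "in_FL0 s p w \<longleftrightarrow> w 0 = 0 \<and>
     (\<lambda>k. (\<bar>real_of_int k\<bar> powr s * cmod (w k)) powr p) summable_on Zset"

definition FL_norm :: "real \<Rightarrow> real \<Rightarrow> (int \<Rightarrow> complex) \<Rightarrow> real" where
  "FL_norm s p w =
     (\<Sum>\<^sub>\<infinity>k\<in>Zset. (\<bar>real_of_int k\<bar> powr s * cmod (w k)) powr p) powr (1 / p)"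

text \<open>Z_{s,p} = || |k|^{-(s+1)} ||_{l^{p'}(Z_0)}, with p' the dual exponent;
for p = 1 (p' = infinity) this is the sup norm, equal to 1.\<close>
definition Zsp :: "real \<Rightarrow> real \<Rightarrow> real" where
  "Zsp s p = (if p = 1 then (SUP k\<in>Zset. \<bar>real_of_int k\<bar> powr (-(s+1)))
     else (let q = p / (p - 1) in
       (\<Sum>\<^sub>\<infinity>k\<in>Zset. (\<bar>real_of_int k\<bar> powr (-(s+1))) powr q) powr (1 / q)))"

definition Cs :: "real \<Rightarrow> nat \<Rightarrow> real" where
  "Cs s n = (if s \<le> 0 then 1 else real n powr s)"

definition tuples :: "nat \<Rightarrow> int \<Rightarrow> int list set" where
  "tuples n k = {ks. length ks = n \<and> (\<forall>j\<in>set ks. j \<noteq> 0) \<and> sum_list ks = k}"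

definition Phi :: "int list \<Rightarrow> int" where
  "Phi ks = (\<Sum>i<length ks. \<Sum>j<length ks. if i < j then 2 * ks ! i * ks ! j else 0)"

definition NN :: "nat \<Rightarrow> real \<Rightarrow> (int \<Rightarrow> complex) \<Rightarrow> int \<Rightarrow> complex" where
  "NN n t w k = (if k = 0 then 0 else
     ((-1) ^ n * of_int k / (2 ^ (n - 1) * fact n)) *
     (\<Sum>\<^sub>\<infinity>ks\<in>tuples n k. exp (\<i> * of_real (of_int (Phi ks) * t)) *
        (\<Prod>j<n. w (ks ! j) / of_int (ks ! j))))"

end

theory Submission
  imports Defs
begin

text \<open>Write \<open>NN n t\<close> as the diagonal of a multilinear form \<open>NN_multi n t\<close>. As the phases have
  modulus one, \<open>|k|^s |NN_multi n t w k|\<close> is at most \<open>|k|^(s+1) / (2^(n-1) n!)\<close> times the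
  convolution, over nonzero indices, of the sequences \<open>|w_j x| / |x|\<close>. Splitting
  \<open>|k|^(s+1) \<le> Cs s n * (\<Sum>i. |k_i|^(s+1))\<close> turns this into \<open>n\<close> convolutions in which one
  factor \<open>|x|^s |w_i x|\<close> lies in \<open>l^p\<close> and the others \<open>|x|^(-s-1) |x|^s |w_j x|\<close> lie in \<open>l^1\<close>,
  with norm at most \<open>Zsp s p\<close> times that of \<open>w_j\<close> by Hoelder's inequality. Young's inequality
  bounds each convolution and Minkowski's inequality sums them; the resulting factor \<open>n\<close>
  cancels against \<open>n!\<close>. For the difference, \<open>NN n t v - NN n t v'\<close> telescopes into \<open>n\<close>
  multilinear terms, each having one argument \<open>v - v'\<close>.\<close>

lemma Youngs_inequality_powr:
  fixes a b q :: real
  assumes "a \<ge> 0" "b > 0" "q \<ge> 1"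
  shows "a * b powr (q - 1) \<le> a powr q / q + (1 - 1/q) * b powr q"
proof (cases "a = 0")
  case False
  then have "(a powr q) powr (1/q) * (b powr q) powr (1 - 1/q) \<le> (1/q) * a powr q + (1 - 1/q) * b powr q"
    by (intro Youngs_inequality_0) (use assms in auto)
  moreover have "(a powr q) powr (1/q) = a" "(b powr q) powr (1 - 1/q) = b powr (q - 1)"
    using assms False by (simp_all add: powr_powr algebra_simps)
  ultimately show ?thesis by simp
qed (use assms in simp)

lemma powr_add_le_two_powr:
  fixes a b p :: real
  assumes "a \<ge> 0" "b \<ge> 0" "p \<ge> 0"
  shows "(a + b) powr p \<le> 2 powr p * (a powr p + b powr p)"
proof -
  have "(a + b) powr p \<le> (2 * max a b) powr p" using assms by (intro powr_mono2) auto
  also have "\<dots> = 2 powr p * max a b powr p" using assms by (simp add: powr_mult)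
  also have "\<dots> \<le> 2 powr p * (a powr p + b powr p)" by (intro mult_left_mono) (auto simp: max_def)
  finally show ?thesis .
qed

lemma sum_prod_except_le:
  fixes C E :: "nat \<Rightarrow> real"
  assumes "\<And>j. j < n \<Longrightarrow> 0 \<le> C j" "\<And>j. j < n \<Longrightarrow> C j \<le> Z * E j" "\<And>j. 0 \<le> E j"
  shows "(\<Sum>i<n. E i * (\<Prod>j\<in>{..<n}-{i}. C j)) \<le> real n * Z ^ (n - 1) * (\<Prod>j<n. E j)"
proof -
  have "E i * (\<Prod>j\<in>{..<n}-{i}. C j) \<le> Z ^ (n - 1) * (\<Prod>j<n. E j)" if i: "i < n" for i
  proof -
    have "(\<Prod>j\<in>{..<n}-{i}. C j) \<le> (\<Prod>j\<in>{..<n}-{i}. Z * E j)"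
      using assms by (intro prod_mono) auto
    also have "\<dots> = Z ^ (n - 1) * (\<Prod>j\<in>{..<n}-{i}. E j)" using i by (simp add: prod.distrib)
    finally have "E i * (\<Prod>j\<in>{..<n}-{i}. C j) \<le> E i * (Z ^ (n - 1) * (\<Prod>j\<in>{..<n}-{i}. E j))"
      using assms(3) by (rule mult_left_mono)
    also have "\<dots> = Z ^ (n - 1) * (\<Prod>j<n. E j)" using i by (simp add: prod.remove)
    finally show ?thesis .
  qed
  then show ?thesis using sum_mono[of "{..<n}" _ "\<lambda>_. Z ^ (n - 1) * (\<Prod>j<n. E j)"] by (simp add: mult.assoc)
qed

section \<open>Weighted power means and the Hoelder and Minkowski inequalities\<close>

lemma has_sum_finite_sum:
  fixes f :: "'i \<Rightarrow> 'a \<Rightarrow> 'b::topological_comm_monoid_add"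
  assumes "finite I" "\<And>i. i \<in> I \<Longrightarrow> (f i has_sum S i) A"
  shows "((\<lambda>x. \<Sum>i\<in>I. f i x) has_sum (\<Sum>i\<in>I. S i)) A"
  using assms by (induction I rule: finite_induct) (auto intro: has_sum_add)

lemma summable_on_mult_powr:
  fixes e w :: "'a \<Rightarrow> real"
  assumes q: "q \<ge> 1" and e: "\<And>x. x \<in> X \<Longrightarrow> e x \<ge> 0" and w: "\<And>x. x \<in> X \<Longrightarrow> w x \<ge> 0"
    and "w summable_on X" and "(\<lambda>x. e x powr q * w x) summable_on X"
  shows "(\<lambda>x. e x * w x) summable_on X"
proof (rule summable_on_comparison_test)
  show "(\<lambda>x. e x powr q * w x + w x) summable_on X" using assms by (intro summable_on_add)
  fix x assume x: "x \<in> X"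
  have "e x \<le> e x powr q + 1"
  proof (cases "e x \<le> 1")
    case False
    then have "e x powr 1 \<le> e x powr q" using q by (intro powr_mono) auto
    then show ?thesis using False by simp
  qed (smt (verit) powr_ge_zero)
  then show "e x * w x \<le> e x powr q * w x + w x"
    using w[OF x] by (metis distrib_right mult_1 mult_right_mono)
qed (use e w in auto)

lemma infsum_mult_powr_tangent_le:
  fixes e w :: "'a \<Rightarrow> real"
  assumes q: "q \<ge> 1" and e: "\<And>x. x \<in> X \<Longrightarrow> e x \<ge> 0" and w: "\<And>x. x \<in> X \<Longrightarrow> w x \<ge> 0"
    and ws: "w summable_on X" and ews: "(\<lambda>x. e x powr q * w x) summable_on X" and mu: "mu > 0"
  shows "(\<Sum>\<^sub>\<infinity>x\<in>X. e x * w x) * mu powr (q - 1)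
           \<le> (\<Sum>\<^sub>\<infinity>x\<in>X. e x powr q * w x) / q + (1 - 1/q) * mu powr q * (\<Sum>\<^sub>\<infinity>x\<in>X. w x)"
proof -
  have s1: "(\<lambda>x. e x powr q * w x / q) summable_on X" and s2: "(\<lambda>x. (1 - 1/q) * mu powr q * w x) summable_on X"
    using summable_on_cmult_left[OF ews, of "1/q"] summable_on_cmult_right[OF ws, of "(1 - 1/q) * mu powr q"]
    by (simp_all add: mult.assoc)
  have "(\<Sum>\<^sub>\<infinity>x\<in>X. e x * w x) * mu powr (q - 1) = (\<Sum>\<^sub>\<infinity>x\<in>X. e x * w x * mu powr (q - 1))"
    by (rule infsum_cmult_left'[symmetric])
  also have "\<dots> \<le> (\<Sum>\<^sub>\<infinity>x\<in>X. e x powr q * w x / q + (1 - 1/q) * mu powr q * w x)"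
  proof (rule infsum_mono)
    show "(\<lambda>x. e x * w x * mu powr (q - 1)) summable_on X"
      using summable_on_mult_powr[OF q e w ws ews] by (rule summable_on_cmult_left)
    fix x assume x: "x \<in> X"
    have "e x * mu powr (q - 1) * w x \<le> (e x powr q / q + (1 - 1/q) * mu powr q) * w x"
      using Youngs_inequality_powr[OF e[OF x] mu q] w[OF x] by (rule mult_right_mono)
    then show "e x * w x * mu powr (q - 1) \<le> e x powr q * w x / q + (1 - 1/q) * mu powr q * w x"
      by (simp add: algebra_simps)
  qed (use s1 s2 in \<open>rule summable_on_add\<close>)
  also have "\<dots> = (\<Sum>\<^sub>\<infinity>x\<in>X. e x powr q * w x) / q + (1 - 1/q) * mu powr q * (\<Sum>\<^sub>\<infinity>x\<in>X. w x)"
    using infsum_cmult_left'[of "\<lambda>x. e x powr q * w x" "1/q" X] infsum_cmult_right'[of "(1 - 1/q) * mu powr q" w X]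
    by (simp only: infsum_add[OF s1 s2]) (simp add: mult.assoc)
  finally show ?thesis .
qed

lemma infsum_weighted_power_mean_le:
  fixes e w :: "'a \<Rightarrow> real"
  assumes q: "q \<ge> 1" and e: "\<And>x. x \<in> X \<Longrightarrow> e x \<ge> 0" and w: "\<And>x. x \<in> X \<Longrightarrow> w x \<ge> 0"
    and ws: "w summable_on X" and ews: "(\<lambda>x. e x powr q * w x) summable_on X"
  shows "(\<Sum>\<^sub>\<infinity>x\<in>X. e x * w x) powr q \<le> (\<Sum>\<^sub>\<infinity>x\<in>X. w x) powr (q - 1) * (\<Sum>\<^sub>\<infinity>x\<in>X. e x powr q * w x)"
proof -
  define S where "S = (\<Sum>\<^sub>\<infinity>x\<in>X. e x * w x)"
  define A where "A = (\<Sum>\<^sub>\<infinity>x\<in>X. e x powr q * w x)"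
  define B where "B = (\<Sum>\<^sub>\<infinity>x\<in>X. w x)"
  have "A \<ge> 0" "B \<ge> 0" unfolding A_def B_def using e w by (auto intro!: infsum_nonneg)
  show ?thesis
  proof (cases "A = 0 \<or> B = 0")
    case True
    have "e x powr q * w x = 0 \<or> w x = 0" if "x \<in> X" for x
    proof (cases "A = 0")
      case True
      then show ?thesis using nonneg_infsum_le_0D[OF _ ews _ that] e w unfolding A_def by auto
    next
      case False
      then show ?thesis using \<open>A = 0 \<or> B = 0\<close> nonneg_infsum_le_0D[OF _ ws _ that] w unfolding B_def by auto
    qed
    then have "S = 0" unfolding S_def by (intro infsum_0) auto
    then show ?thesis using \<open>A \<ge> 0\<close> \<open>B \<ge> 0\<close> q by (simp add: S_def A_def B_def)
  next
    case False
    then have "A > 0" "B > 0" using \<open>A \<ge> 0\<close> \<open>B \<ge> 0\<close> by auto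
    define mu where "mu = (A / B) powr (1/q)"
    have mu: "mu > 0" "mu powr q = A / B"
      using \<open>A > 0\<close> \<open>B > 0\<close> q by (auto simp: mu_def powr_powr)
    have "S * mu powr (q - 1) \<le> A / q + (1 - 1/q) * (A / B) * B"
      using infsum_mult_powr_tangent_le[OF q e w ws ews mu(1)] mu(2) by (simp add: S_def A_def B_def)
    also have "\<dots> = A" using \<open>B > 0\<close> q by (simp add: field_simps)
    finally have "S \<le> A / mu powr (q - 1)" using mu by (simp add: field_simps)
    then have "S powr q \<le> (A / mu powr (q - 1)) powr q"
      using q by (intro powr_mono2) (auto simp: S_def intro!: infsum_nonneg mult_nonneg_nonneg e w)
    also have "\<dots> = A powr q / (mu powr q) powr (q - 1)"
      using mu(1) \<open>A > 0\<close> by (simp add: powr_divide powr_powr mult.commute)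
    also have "\<dots> = A powr q / (A / B) powr (q - 1)" by (simp only: mu(2))
    also have "\<dots> = B powr (q - 1) * A"
      using \<open>A > 0\<close> \<open>B > 0\<close> by (simp add: powr_divide powr_diff field_simps)
    finally show ?thesis by (simp add: S_def A_def B_def)
  qed
qed

lemma Holder_infsum:
  fixes u b :: "'a \<Rightarrow> real"
  assumes p: "p > 1" and pq: "1/p + 1/q = 1"
    and u: "\<And>x. x \<in> X \<Longrightarrow> u x > 0" and b: "\<And>x. x \<in> X \<Longrightarrow> b x \<ge> 0"
    and us: "(\<lambda>x. u x powr q) summable_on X" and bs: "(\<lambda>x. b x powr p) summable_on X"
  shows "(\<lambda>x. u x * b x) summable_on X"
    and "(\<Sum>\<^sub>\<infinity>x\<in>X. u x * b x) \<le> (\<Sum>\<^sub>\<infinity>x\<in>X. u x powr q) powr (1/q) * (\<Sum>\<^sub>\<infinity>x\<in>X. b x powr p) powr (1/p)"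
proof -
  have "q \<noteq> 0" using pq p by auto
  then have q_eq: "q = p / (p - 1)" using p pq by (simp add: field_simps)
  have q: "q > 1" using p unfolding q_eq by (subst less_divide_eq_1_pos) auto
  have exps: "(1 - q) * p + q = 0" "(p - 1) * (1/p) = 1/q"
    using p unfolding q_eq by (simp_all add: field_simps)
  txt \<open>Apply Jensen's inequality to \<open>e = b u powr (1 - q)\<close> with the weights \<open>u powr q\<close>.\<close>
  define e where "e x = b x * u x powr (1 - q)" for x
  have e: "e x \<ge> 0" and ebp: "e x powr p * u x powr q = b x powr p" and eub: "e x * u x powr q = u x * b x"
    if "x \<in> X" for x
  proof -
    show "e x \<ge> 0" using u[OF that] b[OF that] by (simp add: e_def)
    have "e x powr p * u x powr q = b x powr p * u x powr ((1 - q) * p + q)"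
      using u[OF that] b[OF that] by (simp add: e_def powr_mult powr_powr powr_add)
    then show "e x powr p * u x powr q = b x powr p" using exps(1) u[OF that] by simp
    have "e x * u x powr q = b x * u x powr (1 - q + q)"
      by (simp add: e_def mult.assoc powr_add[symmetric])
    then show "e x * u x powr q = u x * b x" using u[OF that] by simp
  qed
  have es: "(\<lambda>x. e x powr p * u x powr q) summable_on X"
    using bs by (rule summable_on_cong[THEN iffD1, rotated]) (simp add: ebp)
  have "(\<lambda>x. e x * u x powr q) summable_on X"
    by (rule summable_on_mult_powr[of p X e "\<lambda>x. u x powr q"]) (use p us es e in auto)
  then show "(\<lambda>x. u x * b x) summable_on X"
    by (rule summable_on_cong[THEN iffD1, rotated]) (simp add: eub)
  define S where "S = (\<Sum>\<^sub>\<infinity>x\<in>X. u x * b x)"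
  define U where "U = (\<Sum>\<^sub>\<infinity>x\<in>X. u x powr q)"
  define B where "B = (\<Sum>\<^sub>\<infinity>x\<in>X. b x powr p)"
  have "S \<ge> 0" "U \<ge> 0" "B \<ge> 0"
    unfolding S_def U_def B_def by (auto intro!: infsum_nonneg mult_nonneg_nonneg b intro: less_imp_le[OF u])
  have "(\<Sum>\<^sub>\<infinity>x\<in>X. e x * u x powr q) = S" "(\<Sum>\<^sub>\<infinity>x\<in>X. e x powr p * u x powr q) = B"
    unfolding S_def B_def by (auto intro!: infsum_cong simp: eub ebp)
  then have "S powr p \<le> U powr (p - 1) * B"
    using infsum_weighted_power_mean_le[of p X e "\<lambda>x. u x powr q"] p us es e unfolding U_def by auto
  then have "(S powr p) powr (1/p) \<le> (U powr (p - 1) * B) powr (1/p)"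
    using p \<open>S \<ge> 0\<close> \<open>U \<ge> 0\<close> \<open>B \<ge> 0\<close> by (intro powr_mono2) auto
  then have "S \<le> U powr (1/q) * B powr (1/p)"
    using p exps(2) \<open>S \<ge> 0\<close> \<open>U \<ge> 0\<close> \<open>B \<ge> 0\<close> by (simp add: powr_powr powr_mult)
  then show "(\<Sum>\<^sub>\<infinity>x\<in>X. u x * b x) \<le> (\<Sum>\<^sub>\<infinity>x\<in>X. u x powr q) powr (1/q) * (\<Sum>\<^sub>\<infinity>x\<in>X. b x powr p) powr (1/p)"
    by (simp add: S_def U_def B_def)
qed

lemma sum_powr_le_weighted:
  fixes x N :: "'i \<Rightarrow> real"
  assumes p: "p \<ge> 1" and "finite J" and x: "\<And>i. i \<in> J \<Longrightarrow> x i \<ge> 0" and N: "\<And>i. i \<in> J \<Longrightarrow> N i > 0"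
  shows "(\<Sum>i\<in>J. x i) powr p \<le> (\<Sum>i\<in>J. N i) powr (p - 1) * (\<Sum>i\<in>J. x i powr p * N i powr (1 - p))"
proof -
  have "(\<Sum>i\<in>J. x i / N i * N i) powr p \<le> (\<Sum>i\<in>J. N i) powr (p - 1) * (\<Sum>i\<in>J. (x i / N i) powr p * N i)"
    using infsum_weighted_power_mean_le[of p J "\<lambda>i. x i / N i" N] assms by (auto intro: less_imp_le)
  moreover have "x i / N i * N i = x i" "(x i / N i) powr p * N i = x i powr p * N i powr (1 - p)"
    if "i \<in> J" for i
    using x[OF that] N[OF that] by (simp_all add: powr_divide powr_diff)
  ultimately show ?thesis by (simp cong: sum.cong)
qed

lemma Minkowski_infsum_pos:
  fixes T :: "'i \<Rightarrow> 'a \<Rightarrow> real"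
  assumes p: "p \<ge> 1" and J: "finite J" "J \<noteq> {}"
    and T: "\<And>i k. i \<in> J \<Longrightarrow> k \<in> K \<Longrightarrow> T i k \<ge> 0" and N: "\<And>i. i \<in> J \<Longrightarrow> N i > 0"
    and Ts: "\<And>i. i \<in> J \<Longrightarrow> (\<lambda>k. T i k powr p) summable_on K"
    and TN: "\<And>i. i \<in> J \<Longrightarrow> (\<Sum>\<^sub>\<infinity>k\<in>K. T i k powr p) \<le> N i powr p"
  shows "(\<lambda>k. (\<Sum>i\<in>J. T i k) powr p) summable_on K \<and> (\<Sum>\<^sub>\<infinity>k\<in>K. (\<Sum>i\<in>J. T i k) powr p) \<le> (\<Sum>i\<in>J. N i) powr p"
proof -
  define Nt where "Nt = (\<Sum>i\<in>J. N i)"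
  have Nt: "Nt > 0" unfolding Nt_def using J N by (intro sum_pos) auto
  define G where "G k = Nt powr (p - 1) * (\<Sum>i\<in>J. T i k powr p * N i powr (1 - p))" for k
  have G: "(G has_sum Nt powr (p - 1) * (\<Sum>i\<in>J. (\<Sum>\<^sub>\<infinity>k\<in>K. T i k powr p) * N i powr (1 - p))) K"
    unfolding G_def
  proof (rule has_sum_cmult_right, rule has_sum_finite_sum[OF J(1)])
    fix i assume "i \<in> J"
    then show "((\<lambda>k. T i k powr p * N i powr (1 - p)) has_sum (\<Sum>\<^sub>\<infinity>k\<in>K. T i k powr p) * N i powr (1 - p)) K"
      using Ts by (intro has_sum_cmult_left) (simp add: has_sum_infsum)
  qed
  have le: "(\<Sum>i\<in>J. T i k) powr p \<le> G k" if "k \<in> K" for k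
    unfolding G_def Nt_def using p J(1) T[OF _ that] N by (rule sum_powr_le_weighted)
  have summ: "(\<lambda>k. (\<Sum>i\<in>J. T i k) powr p) summable_on K"
    by (rule summable_on_comparison_test[of G]) (use G le in \<open>auto dest: has_sum_imp_summable\<close>)
  have "(\<Sum>\<^sub>\<infinity>k\<in>K. (\<Sum>i\<in>J. T i k) powr p) \<le> infsum G K"
    by (rule infsum_mono[OF summ _ le]) (use G in \<open>auto dest: has_sum_imp_summable\<close>)
  also have "\<dots> \<le> Nt powr (p - 1) * (\<Sum>i\<in>J. N i powr p * N i powr (1 - p))"
    using G TN by (auto simp: infsumI intro!: mult_left_mono sum_mono mult_right_mono)
  also have "\<dots> = Nt powr (p - 1) * Nt"
    unfolding Nt_def by (intro arg_cong[where f="(*) _"] sum.cong) (auto simp flip: powr_add intro!: abs_of_pos N)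
  also have "\<dots> = Nt powr p" using Nt by (simp add: powr_diff)
  finally show ?thesis using summ by (simp add: Nt_def)
qed

lemma Minkowski_infsum:
  fixes T :: "'i \<Rightarrow> 'a \<Rightarrow> real"
  assumes p: "p \<ge> 1" and I: "finite I"
    and T: "\<And>i k. i \<in> I \<Longrightarrow> k \<in> K \<Longrightarrow> T i k \<ge> 0" and N: "\<And>i. i \<in> I \<Longrightarrow> N i \<ge> 0"
    and Ts: "\<And>i. i \<in> I \<Longrightarrow> (\<lambda>k. T i k powr p) summable_on K"
    and TN: "\<And>i. i \<in> I \<Longrightarrow> (\<Sum>\<^sub>\<infinity>k\<in>K. T i k powr p) \<le> N i powr p"
  shows "(\<lambda>k. (\<Sum>i\<in>I. T i k) powr p) summable_on K \<and> (\<Sum>\<^sub>\<infinity>k\<in>K. (\<Sum>i\<in>I. T i k) powr p) \<le> (\<Sum>i\<in>I. N i) powr p"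
proof -
  define J where "J = {i\<in>I. N i > 0}"
  have J: "finite J" "J \<subseteq> I" using I by (auto simp: J_def)
  have "T i k = 0" if "i \<in> I - J" "k \<in> K" for i k
  proof -
    have "(\<Sum>\<^sub>\<infinity>k\<in>K. T i k powr p) \<le> 0" using TN[of i] N[of i] p that by (auto simp: J_def)
    then show ?thesis using nonneg_infsum_le_0D[OF _ Ts] that by fastforce
  qed
  then have sums: "(\<Sum>i\<in>I. T i k) = (\<Sum>i\<in>J. T i k)" if "k \<in> K" for k
    using I J that by (intro sum.mono_neutral_right) auto
  have "(\<Sum>i\<in>I. N i) = (\<Sum>i\<in>J. N i)"
    using I J N by (intro sum.mono_neutral_right) (auto simp: J_def order.order_iff_strict)
  moreover have "(\<lambda>k. (\<Sum>i\<in>J. T i k) powr p) summable_on K \<and> (\<Sum>\<^sub>\<infinity>k\<in>K. (\<Sum>i\<in>J. T i k) powr p) \<le> (\<Sum>i\<in>J. N i) powr p"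
  proof (cases "J = {}")
    case True
    then show ?thesis by simp
  next
    case False
    then show ?thesis using p J T Ts TN by (intro Minkowski_infsum_pos) (auto simp: J_def)
  qed
  ultimately show ?thesis using sums by (simp cong: infsum_cong summable_on_cong)
qed

lemma infsum_powr_le_by_comparison:
  fixes A B :: "'a \<Rightarrow> real"
  assumes p: "p > 0" and A: "\<And>k. k \<in> K \<Longrightarrow> 0 \<le> A k" and AB: "\<And>k. k \<in> K \<Longrightarrow> A k \<le> c * B k"
    and Bs: "(\<lambda>k. B k powr p) summable_on K" and BR: "(\<Sum>\<^sub>\<infinity>k\<in>K. B k powr p) \<le> R powr p"
    and "c \<ge> 0" "R \<ge> 0"
  shows "(\<lambda>k. A k powr p) summable_on K \<and> (\<Sum>\<^sub>\<infinity>k\<in>K. A k powr p) \<le> (c * R) powr p"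
proof -
  have le: "A k powr p \<le> c powr p * B k powr p" if "k \<in> K" for k
  proof -
    have "A k powr p \<le> (c * B k) powr p" using A[OF that] AB[OF that] p by (intro powr_mono2) auto
    also have "\<dots> = c powr p * B k powr p"
      using A[OF that] AB[OF that] \<open>c \<ge> 0\<close> by (cases "c = 0") (auto simp: powr_mult zero_le_mult_iff)
    finally show ?thesis .
  qed
  have cBs: "(\<lambda>k. c powr p * B k powr p) summable_on K" using Bs by (rule summable_on_cmult_right)
  have As: "(\<lambda>k. A k powr p) summable_on K"
    by (rule summable_on_comparison_test[OF cBs]) (use le in auto)
  have "(\<Sum>\<^sub>\<infinity>k\<in>K. A k powr p) \<le> (\<Sum>\<^sub>\<infinity>k\<in>K. c powr p * B k powr p)"
    by (rule infsum_mono[OF As cBs le])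
  also have "\<dots> \<le> c powr p * R powr p" using BR by (simp add: infsum_cmult_right' mult_left_mono)
  also have "\<dots> = (c * R) powr p" using \<open>c \<ge> 0\<close> \<open>R \<ge> 0\<close> by (simp add: powr_mult)
  finally show ?thesis using As by simp
qed

lemma has_sum_prod_PiE_nonneg:
  fixes f :: "'i \<Rightarrow> 'b \<Rightarrow> real"
  assumes A: "finite A" and f: "\<And>x y. x \<in> A \<Longrightarrow> y \<in> B x \<Longrightarrow> f x y \<ge> 0"
    and fs: "\<And>x. x \<in> A \<Longrightarrow> f x summable_on B x"
  shows "((\<lambda>g. \<Prod>x\<in>A. f x (g x)) has_sum (\<Prod>x\<in>A. infsum (f x) (B x))) (PiE A B)"
proof -
  have bound: "(\<Sum>g\<in>P. \<Prod>x\<in>A. f x (g x)) \<le> (\<Prod>x\<in>A. infsum (f x) (B x))"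
    if P: "P \<subseteq> PiE A B" "finite P" for P
  proof -
    define B' where "B' x = {g x| g. g \<in> P}" for x
    have B': "finite (B' x)" for x using P by (auto simp: B'_def)
    have "P \<subseteq> PiE A B'" using P by (auto simp: B'_def PiE_def Pi_def extensional_def)
    moreover have B'B: "B' x \<subseteq> B x" if "x \<in> A" for x using P that by (auto simp: B'_def)
    ultimately have "(\<Sum>g\<in>P. \<Prod>x\<in>A. f x (g x)) \<le> (\<Sum>g\<in>PiE A B'. \<Prod>x\<in>A. f x (g x))"
      using A B' f by (intro sum_mono2) (force intro!: prod_nonneg finite_PiE simp: PiE_def Pi_def)+
    also have "\<dots> = (\<Prod>x\<in>A. \<Sum>y\<in>B' x. f x y)"
      using A B' by (intro prod_sum_PiE[symmetric]) auto
    also have "\<dots> \<le> (\<Prod>x\<in>A. infsum (f x) (B x))"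
      using f B'B by (intro prod_mono conjI sum_nonneg finite_sum_le_infsum fs B') auto
    finally show ?thesis .
  qed
  have "(\<lambda>g. \<Prod>x\<in>A. f x (g x)) summable_on PiE A B"
    using f bound by (intro nonneg_bdd_above_summable_on)
      (auto intro!: prod_nonneg simp: PiE_def Pi_def bdd_above_def, blast)
  moreover have "(\<lambda>y. norm (f x y)) summable_on B x" if "x \<in> A" for x
    using fs[OF that] by (rule summable_on_cong[THEN iffD1, rotated]) (use f that in auto)
  then have "infsum (\<lambda>g. \<Prod>x\<in>A. f x (g x)) (PiE A B) = (\<Prod>x\<in>A. infsum (f x) (B x))"
    by (intro infsum_prod_PiE_abs A) auto
  ultimately show ?thesis by (simp add: has_sum_iff)
qed

section \<open>Tuples of nonzero integers and Young's inequality\<close>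

text \<open>Tuples in \<open>Zset\<^sup>n\<close> are encoded here as extensional functions on \<open>{..<n}\<close>, which suits
  \<open>PiE\<close>; \<open>bij_betw_nonzero_tuples_sum_tuples\<close> relates them to the lists of \<open>tuples\<close>.\<close>
definition nonzero_tuples :: "nat \<Rightarrow> (nat \<Rightarrow> int) set" where
  "nonzero_tuples n = PiE {..<n} (\<lambda>_. Zset)"

definition nonzero_tuples_sum :: "nat \<Rightarrow> int \<Rightarrow> (nat \<Rightarrow> int) set" where
  "nonzero_tuples_sum n k = {g \<in> nonzero_tuples n. (\<Sum>i<n. g i) = k}"

lemma nonzero_tuples_sum_subset: "nonzero_tuples_sum n k \<subseteq> nonzero_tuples n"
  by (auto simp: nonzero_tuples_sum_def)

lemma nonzero_tuples_sum_nonzero: "g \<in> nonzero_tuples_sum n k \<Longrightarrow> j < n \<Longrightarrow> g j \<noteq> 0"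
  by (auto simp: nonzero_tuples_sum_def nonzero_tuples_def Zset_def)

lemma has_sum_nonzero_tuples_sum:
  fixes V :: "(nat \<Rightarrow> int) \<Rightarrow> real"
  assumes "V summable_on nonzero_tuples n"
  shows "((\<lambda>k. \<Sum>\<^sub>\<infinity>g\<in>nonzero_tuples_sum n k. V g) has_sum (\<Sum>\<^sub>\<infinity>g\<in>nonzero_tuples n. V g)) UNIV"
proof -
  define h where "h g = ((\<Sum>i<n. g i), g)" for g :: "nat \<Rightarrow> int"
  have inj: "inj_on h (nonzero_tuples n)" by (auto simp: h_def inj_on_def)
  have img: "h ` nonzero_tuples n = Sigma UNIV (nonzero_tuples_sum n)"
    by (auto simp: h_def nonzero_tuples_sum_def image_def)
  have "((\<lambda>(k, g). V g) has_sum (\<Sum>\<^sub>\<infinity>g\<in>nonzero_tuples n. V g)) (h ` nonzero_tuples n)"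
    using assms by (subst has_sum_reindex[OF inj]) (simp add: h_def o_def has_sum_infsum)
  then show ?thesis unfolding img
    by (rule has_sum_SigmaD)
      (use summable_on_subset_banach[OF assms nonzero_tuples_sum_subset] in \<open>simp add: has_sum_infsum\<close>)
qed

lemma inj_on_restrict_nonzero_tuples_sum:
  assumes "i < n"
  shows "inj_on (\<lambda>g. restrict g ({..<n} - {i})) (nonzero_tuples_sum n k)"
proof (rule inj_onI)
  fix g g' assume g: "g \<in> nonzero_tuples_sum n k" and g': "g' \<in> nonzero_tuples_sum n k"
    and eq: "restrict g ({..<n} - {i}) = restrict g' ({..<n} - {i})"
  have other: "g j = g' j" if "j \<in> {..<n} - {i}" for j using fun_cong[OF eq, of j] that by simp
  have "g i + (\<Sum>j\<in>{..<n} - {i}. g j) = g' i + (\<Sum>j\<in>{..<n} - {i}. g' j)"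
    using g g' assms by (simp add: nonzero_tuples_sum_def flip: sum.remove)
  moreover have "(\<Sum>j\<in>{..<n} - {i}. g j) = (\<Sum>j\<in>{..<n} - {i}. g' j)" using other by simp
  ultimately have "g j = g' j" if "j < n" for j using other that by (cases "j = i") auto
  moreover have "g j = g' j" if "\<not> j < n" for j using g g' that
    by (auto simp: nonzero_tuples_sum_def nonzero_tuples_def PiE_def extensional_def)
  ultimately show "g = g'" by (metis ext)
qed

lemma prod_except_summable_on_nonzero_tuples_sum:
  fixes c :: "nat \<Rightarrow> int \<Rightarrow> real"
  assumes i: "i < n" and c: "\<And>j x. c j x \<ge> 0" and cs: "\<And>j. j < n \<Longrightarrow> j \<noteq> i \<Longrightarrow> c j summable_on Zset"
  shows "(\<lambda>g. \<Prod>j\<in>{..<n}-{i}. c j (g j)) summable_on nonzero_tuples_sum n k"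
    and "(\<Sum>\<^sub>\<infinity>g\<in>nonzero_tuples_sum n k. \<Prod>j\<in>{..<n}-{i}. c j (g j)) \<le> (\<Prod>j\<in>{..<n}-{i}. infsum (c j) Zset)"
proof -
  define I where "I = {..<n} - {i}"
  define W where "W g = (\<Prod>j\<in>I. c j (g j))" for g :: "nat \<Rightarrow> int"
  define r where "r g = restrict g I" for g :: "nat \<Rightarrow> int"
  have W: "(W has_sum (\<Prod>j\<in>I. infsum (c j) Zset)) (PiE I (\<lambda>_. Zset))"
    unfolding W_def using c cs by (intro has_sum_prod_PiE_nonneg) (auto simp: I_def)
  have inj: "inj_on r (nonzero_tuples_sum n k)"
    unfolding r_def I_def by (rule inj_on_restrict_nonzero_tuples_sum[OF i])
  have sub: "r ` nonzero_tuples_sum n k \<subseteq> PiE I (\<lambda>_. Zset)"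
    by (auto simp: r_def nonzero_tuples_sum_def nonzero_tuples_def I_def PiE_def Pi_def)
  have Wr: "W \<circ> r = W" by (auto simp: W_def r_def o_def)
  have "W summable_on r ` nonzero_tuples_sum n k"
    using summable_on_subset_banach[OF has_sum_imp_summable[OF W] sub] .
  then have "(W \<circ> r) summable_on nonzero_tuples_sum n k" using summable_on_reindex[OF inj] by blast
  then have "W summable_on nonzero_tuples_sum n k" by (simp only: Wr)
  then show "(\<lambda>g. \<Prod>j\<in>{..<n}-{i}. c j (g j)) summable_on nonzero_tuples_sum n k"
    unfolding W_def[abs_def] I_def .
  have "infsum W (nonzero_tuples_sum n k) = infsum W (r ` nonzero_tuples_sum n k)"
    using infsum_reindex[OF inj, of W] by (simp add: Wr)
  also have "\<dots> \<le> infsum W (PiE I (\<lambda>_. Zset))"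
    using summable_on_subset_banach[OF has_sum_imp_summable[OF W] sub] has_sum_imp_summable[OF W] sub
    by (intro infsum_mono2) (auto simp: W_def intro!: prod_nonneg c)
  finally show "(\<Sum>\<^sub>\<infinity>g\<in>nonzero_tuples_sum n k. \<Prod>j\<in>{..<n}-{i}. c j (g j)) \<le> (\<Prod>j\<in>{..<n}-{i}. infsum (c j) Zset)"
    using W unfolding W_def[abs_def] I_def by (simp add: infsumI)
qed

lemma has_sum_nonzero_tuples_factor:
  fixes a :: "int \<Rightarrow> real" and c :: "nat \<Rightarrow> int \<Rightarrow> real"
  assumes i: "i < n" and a: "\<And>x. a x \<ge> 0" and c: "\<And>j x. c j x \<ge> 0"
    and as: "a summable_on Zset" and cs: "\<And>j. j < n \<Longrightarrow> j \<noteq> i \<Longrightarrow> c j summable_on Zset"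
  shows "((\<lambda>g. a (g i) * (\<Prod>j\<in>{..<n}-{i}. c j (g j)))
           has_sum (infsum a Zset * (\<Prod>j\<in>{..<n}-{i}. infsum (c j) Zset))) (nonzero_tuples n)"
proof -
  define f where "f j = (if j = i then a else c j)" for j
  have "((\<lambda>g. \<Prod>j<n. f j (g j)) has_sum (\<Prod>j<n. infsum (f j) Zset)) (nonzero_tuples n)"
    unfolding nonzero_tuples_def by (rule has_sum_prod_PiE_nonneg) (use a c as cs in \<open>auto simp: f_def\<close>)
  moreover have "(\<Prod>j<n. f j (g j)) = a (g i) * (\<Prod>j\<in>{..<n}-{i}. c j (g j))" for g
    using i by (simp add: prod.remove f_def cong: prod.cong_simp)
  moreover have "(\<Prod>j<n. infsum (f j) Zset) = infsum a Zset * (\<Prod>j\<in>{..<n}-{i}. infsum (c j) Zset)"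
    using i by (simp add: prod.remove f_def cong: prod.cong_simp)
  ultimately show ?thesis by simp
qed

lemma Young_nonzero_tuples:
  fixes e :: "int \<Rightarrow> real" and c :: "nat \<Rightarrow> int \<Rightarrow> real"
  assumes p: "p \<ge> 1" and i: "i < n" and e: "\<And>x. e x \<ge> 0" and c: "\<And>j x. c j x \<ge> 0"
    and es: "(\<lambda>x. e x powr p) summable_on Zset"
    and cs: "\<And>j. j < n \<Longrightarrow> j \<noteq> i \<Longrightarrow> c j summable_on Zset"
  defines "T k \<equiv> \<Sum>\<^sub>\<infinity>g\<in>nonzero_tuples_sum n k. e (g i) * (\<Prod>j\<in>{..<n}-{i}. c j (g j))"
  shows "(\<lambda>g. e (g i) * (\<Prod>j\<in>{..<n}-{i}. c j (g j))) summable_on nonzero_tuples_sum n k"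
    and "(\<lambda>k. T k powr p) summable_on UNIV"
    and "(\<Sum>\<^sub>\<infinity>k. T k powr p) \<le> (\<Sum>\<^sub>\<infinity>x\<in>Zset. e x powr p) * (\<Prod>j\<in>{..<n}-{i}. infsum (c j) Zset) powr p"
proof -
  define W where "W g = (\<Prod>j\<in>{..<n}-{i}. c j (g j))" for g :: "nat \<Rightarrow> int"
  define P where "P = (\<Prod>j\<in>{..<n}-{i}. infsum (c j) Zset)"
  define V where "V g = e (g i) powr p * W g" for g
  have W: "W g \<ge> 0" for g unfolding W_def by (intro prod_nonneg c)
  have "P \<ge> 0" unfolding P_def by (intro prod_nonneg infsum_nonneg c)
  have Wk: "W summable_on nonzero_tuples_sum n k" "infsum W (nonzero_tuples_sum n k) \<le> P" for k
    using prod_except_summable_on_nonzero_tuples_sum[OF i c cs] unfolding W_def[abs_def] P_def by auto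
  have V: "(V has_sum (\<Sum>\<^sub>\<infinity>x\<in>Zset. e x powr p) * P) (nonzero_tuples n)"
    unfolding V_def W_def P_def using i c cs es by (intro has_sum_nonzero_tuples_factor) auto
  define U where "U k = infsum V (nonzero_tuples_sum n k)" for k
  have U: "(U has_sum (\<Sum>\<^sub>\<infinity>x\<in>Zset. e x powr p) * P) UNIV"
    unfolding U_def using has_sum_nonzero_tuples_sum[OF has_sum_imp_summable[OF V]] V by (simp add: infsumI)
  txt \<open>Jensen's inequality on each fibre \<open>nonzero_tuples_sum n k\<close>, whose weights \<open>W\<close> have
    total mass at most \<open>P\<close>; summing over \<open>k\<close> recovers the full sum \<open>V\<close>.\<close>
  have TU: "(\<lambda>g. e (g i) * W g) summable_on nonzero_tuples_sum n k \<and> T k powr p \<le> P powr (p - 1) * U k" for k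
  proof -
    have Vk: "(\<lambda>g. e (g i) powr p * W g) summable_on nonzero_tuples_sum n k"
      using summable_on_subset_banach[OF has_sum_imp_summable[OF V] nonzero_tuples_sum_subset]
      unfolding V_def .
    have "T k powr p \<le> infsum W (nonzero_tuples_sum n k) powr (p - 1) * U k"
      unfolding T_def U_def V_def W_def[symmetric]
      by (rule infsum_weighted_power_mean_le) (use p e W Wk Vk in auto)
    also have "\<dots> \<le> P powr (p - 1) * U k"
      using Wk(2) p W U_def V_def by (intro mult_right_mono powr_mono2 infsum_nonneg)
        (auto intro!: infsum_nonneg mult_nonneg_nonneg simp: V_def)
    finally show ?thesis using summable_on_mult_powr[OF p _ W Wk(1) Vk] e by auto
  qed
  then show "(\<lambda>g. e (g i) * (\<Prod>j\<in>{..<n}-{i}. c j (g j))) summable_on nonzero_tuples_sum n k"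
    unfolding W_def by blast
  show Ts: "(\<lambda>k. T k powr p) summable_on UNIV"
    by (rule summable_on_comparison_test[of "\<lambda>k. P powr (p - 1) * U k"])
       (use U TU in \<open>auto intro!: summable_on_cmult_right dest: has_sum_imp_summable\<close>)
  have "(\<Sum>\<^sub>\<infinity>k. T k powr p) \<le> (\<Sum>\<^sub>\<infinity>k. P powr (p - 1) * U k)"
    by (rule infsum_mono[OF Ts]) (use U TU in \<open>auto intro!: summable_on_cmult_right dest: has_sum_imp_summable\<close>)
  also have "\<dots> = P powr (p - 1) * ((\<Sum>\<^sub>\<infinity>x\<in>Zset. e x powr p) * P)"
    using U by (simp add: infsum_cmult_right' infsumI)
  also have "\<dots> = (\<Sum>\<^sub>\<infinity>x\<in>Zset. e x powr p) * P powr p"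
    using \<open>P \<ge> 0\<close> by (cases "P = 0") (simp_all add: powr_diff)
  finally show "(\<Sum>\<^sub>\<infinity>k. T k powr p) \<le> (\<Sum>\<^sub>\<infinity>x\<in>Zset. e x powr p) * (\<Prod>j\<in>{..<n}-{i}. infsum (c j) Zset) powr p"
    unfolding P_def .
qed

lemma admissible_exponents:
  fixes s p :: real
  assumes "(s > - 1 / p \<and> p > 1) \<or> (s \<ge> -1 \<and> p = 1)"
  shows "p \<ge> 1" "s \<ge> -1"
proof -
  show "p \<ge> 1" using assms by auto
  have "- 1 / p \<ge> -1" if "p > 1" using that by (simp add: field_simps)
  then show "s \<ge> -1" using assms by (smt (verit))
qed

lemma Cs_nonneg: "Cs s n \<ge> 0"
  by (simp add: Cs_def)

lemma powr_le_Cs_sum_powr: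
  fixes s K :: real and x :: "nat \<Rightarrow> real"
  assumes s: "s \<ge> -1" and n: "n \<ge> 1" and x: "\<And>i. i < n \<Longrightarrow> x i > 0"
    and K: "0 < K" "K \<le> (\<Sum>i<n. x i)"
  shows "K powr (s + 1) \<le> Cs s n * (\<Sum>i<n. x i powr (s + 1))"
proof -
  define S where "S = (\<Sum>i<n. x i)"
  have "S > 0" using K by (simp add: S_def)
  have "K powr (s + 1) \<le> S powr (s + 1)" using K s by (intro powr_mono2) (auto simp: S_def)
  also have "\<dots> \<le> Cs s n * (\<Sum>i<n. x i powr (s + 1))"
  proof (cases "s \<le> 0")
    case True
    txt \<open>For \<open>s + 1 \<le> 1\<close> the function \<open>y \<mapsto> y powr (s + 1)\<close> is subadditive.\<close>
    have "x i / S \<le> (x i / S) powr (s + 1)" if "i < n" for i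
    proof -
      have "x i \<le> S" unfolding S_def using x that by (intro member_le_sum) (auto intro: less_imp_le)
      then have "(x i / S) powr 1 \<le> (x i / S) powr (s + 1)"
        using True s x[OF that] \<open>S > 0\<close> by (intro powr_mono') auto
      then show ?thesis using x[OF that] \<open>S > 0\<close> by simp
    qed
    then have "S powr (s + 1) * (\<Sum>i<n. x i / S) \<le> S powr (s + 1) * (\<Sum>i<n. (x i / S) powr (s + 1))"
      by (intro mult_left_mono sum_mono) auto
    moreover have "(\<Sum>i<n. x i / S) = 1" using \<open>S > 0\<close> by (simp add: S_def flip: sum_divide_distrib)
    ultimately show ?thesis
      using True \<open>S > 0\<close> x by (simp add: Cs_def sum_distrib_left powr_divide less_imp_le)
  next
    case False
    have "(\<Sum>i<n. x i) powr (s + 1) \<le> (\<Sum>i<n. 1) powr (s + 1 - 1) * (\<Sum>i<n. x i powr (s + 1) * 1 powr (1 - (s + 1)))"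
      using False x by (intro sum_powr_le_weighted) (auto intro: less_imp_le)
    then show ?thesis using False by (simp add: S_def Cs_def)
  qed
  finally show ?thesis .
qed

lemma summable_on_Zset_abs_powr:
  fixes beta :: real
  assumes "beta > 1"
  shows "(\<lambda>x::int. \<bar>real_of_int x\<bar> powr (-beta)) summable_on Zset"
proof -
  define f where "f x = \<bar>real_of_int x\<bar> powr (-beta)" for x :: int
  have "summable (\<lambda>n::nat. real n powr (-beta))" using assms by (subst summable_real_powr_iff) auto
  then have nat: "(\<lambda>n::nat. real n powr (-beta)) summable_on UNIV"
    by (rule summable_nonneg_imp_summable_on) simp
  have "(f \<circ> (\<lambda>n::nat. int n)) summable_on UNIV" "(f \<circ> (\<lambda>n::nat. - int n)) summable_on UNIV"
    using nat by (simp_all add: f_def o_def)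
  then have "f summable_on range int" "f summable_on range (\<lambda>n::nat. - int n)"
    by (simp_all add: summable_on_reindex inj_on_def)
  then have "f summable_on (range int \<union> range (\<lambda>n::nat. - int n))"
    by (rule summable_on_union)
  moreover have "Zset \<subseteq> range int \<union> range (\<lambda>n::nat. - int n)"
    by (auto simp: Zset_def image_def) presburger
  ultimately show ?thesis unfolding f_def by (rule summable_on_subset_banach)
qed

lemma abs_powr_neg_le_one:
  assumes "k \<in> Zset" "s \<ge> -1"
  shows "\<bar>real_of_int k\<bar> powr (-(s+1)) \<le> 1"
proof -
  have "\<bar>real_of_int k\<bar> \<ge> 1" using assms by (auto simp: Zset_def)
  then show ?thesis using powr_mono[of "-(s+1)" 0 "\<bar>real_of_int k\<bar>"] assms by (simp split: if_splits)
qed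

lemma Zsp_one: "s \<ge> -1 \<Longrightarrow> Zsp s 1 = 1"
proof -
  assume s: "s \<ge> -1"
  have "(SUP k\<in>Zset. \<bar>real_of_int k\<bar> powr (-(s+1))) = 1"
  proof (rule cSup_eq_maximum)
    show "1 \<in> (\<lambda>k. \<bar>real_of_int k\<bar> powr (-(s+1))) ` Zset"
      by (rule image_eqI[of _ _ 1]) (auto simp: Zset_def)
  qed (use s abs_powr_neg_le_one in auto)
  then show ?thesis by (simp add: Zsp_def)
qed

lemma Zsp_nonneg: "s \<ge> -1 \<Longrightarrow> Zsp s p \<ge> 0"
  by (cases "p = 1") (simp_all add: Zsp_one, simp add: Zsp_def Let_def)

text \<open>Hoelder's inequality against the weight \<open>|x| powr -(s+1)\<close>, whose \<open>l^p'\<close>-norm over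
  \<open>Zset\<close> is \<open>Zsp s p\<close>.\<close>
lemma infsum_abs_powr_mult_le_Zsp:
  fixes b :: "int \<Rightarrow> real"
  assumes sp: "(s > - 1 / p \<and> p > 1) \<or> (s \<ge> -1 \<and> p = 1)"
    and b: "\<And>x. b x \<ge> 0" and bs: "(\<lambda>x. b x powr p) summable_on Zset"
  shows "(\<lambda>x. \<bar>real_of_int x\<bar> powr (-(s+1)) * b x) summable_on Zset \<and>
    (\<Sum>\<^sub>\<infinity>x\<in>Zset. \<bar>real_of_int x\<bar> powr (-(s+1)) * b x) \<le> Zsp s p * (\<Sum>\<^sub>\<infinity>x\<in>Zset. b x powr p) powr (1/p)"
proof (cases "p = 1")
  case True
  then have s: "s \<ge> -1" using sp by auto
  have le: "\<bar>real_of_int x\<bar> powr (-(s+1)) * b x \<le> b x" if "x \<in> Zset" for x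
    using abs_powr_neg_le_one[OF that s] b[of x] by (simp add: mult_left_le_one_le)
  have "b summable_on Zset" using bs True b by simp
  moreover from this have "(\<lambda>x. \<bar>real_of_int x\<bar> powr (-(s+1)) * b x) summable_on Zset"
    by (rule summable_on_comparison_test) (use le b in auto)
  moreover from calculation have "(\<Sum>\<^sub>\<infinity>x\<in>Zset. \<bar>real_of_int x\<bar> powr (-(s+1)) * b x) \<le> infsum b Zset"
    using le by (intro infsum_mono) auto
  ultimately show ?thesis using True Zsp_one[OF s] b by (simp add: infsum_nonneg)
next
  case False
  then have p: "p > 1" and s: "s > - 1 / p" using sp by auto
  define q where "q = p / (p - 1)"
  have pq: "1/p + 1/q = 1" using p by (simp add: q_def field_simps)
  have "(s + 1) * q > 1"
  proof -
    have "s + 1 > (p - 1) / p" using s p by (simp add: field_simps)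
    then show ?thesis using p by (simp add: q_def field_simps)
  qed
  then have "(\<lambda>x::int. \<bar>real_of_int x\<bar> powr (-((s+1) * q))) summable_on Zset"
    by (rule summable_on_Zset_abs_powr)
  then have us: "(\<lambda>x. (\<bar>real_of_int x\<bar> powr (-(s+1))) powr q) summable_on Zset"
    by (simp add: powr_powr algebra_simps)
  have "Zsp s p = (\<Sum>\<^sub>\<infinity>x\<in>Zset. (\<bar>real_of_int x\<bar> powr (-(s+1))) powr q) powr (1/q)"
    using False by (simp add: Zsp_def Let_def q_def)
  then show ?thesis
    using Holder_infsum[OF p pq _ b us bs] by (auto simp: Zset_def)
qed

section \<open>Weighted convolution estimate\<close>

definition nonzero_convolution :: "nat \<Rightarrow> (nat \<Rightarrow> int \<Rightarrow> real) \<Rightarrow> int \<Rightarrow> real" where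
  "nonzero_convolution n c k = (\<Sum>\<^sub>\<infinity>g\<in>nonzero_tuples_sum n k. \<Prod>j<n. c j (g j))"

lemma summable_on_nonzero_tuples_sum_prod:
  fixes c :: "nat \<Rightarrow> int \<Rightarrow> real"
  assumes "\<And>j x. c j x \<ge> 0" "\<And>j. j < n \<Longrightarrow> c j summable_on Zset"
  shows "(\<lambda>g. \<Prod>j<n. c j (g j)) summable_on nonzero_tuples_sum n k"
proof -
  have "(\<lambda>g. \<Prod>j<n. c j (g j)) summable_on nonzero_tuples n"
    unfolding nonzero_tuples_def
    by (rule has_sum_imp_summable[OF has_sum_prod_PiE_nonneg]) (use assms in auto)
  then show ?thesis by (rule summable_on_subset_banach[OF _ nonzero_tuples_sum_subset])
qed

text \<open>The weight \<open>|k| powr (s+1)\<close> of the output is distributed over the inputs, each of which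
  absorbs it into its own \<open>|g i| powr -(s+1)\<close>.\<close>
lemma abs_powr_prod_le_Cs_sum:
  fixes e :: "nat \<Rightarrow> int \<Rightarrow> real"
  assumes s: "s \<ge> -1" and n: "n \<ge> 1" and e: "\<And>j x. e j x \<ge> 0"
    and g: "g \<in> nonzero_tuples_sum n k" and k: "k \<noteq> 0"
  defines "c \<equiv> \<lambda>j x. \<bar>real_of_int x\<bar> powr (-(s+1)) * e j x"
  shows "\<bar>real_of_int k\<bar> powr (s+1) * (\<Prod>j<n. c j (g j))
           \<le> Cs s n * (\<Sum>i<n. e i (g i) * (\<Prod>j\<in>{..<n}-{i}. c j (g j)))"
proof -
  have gnz: "g i \<noteq> 0" if "i < n" for i using nonzero_tuples_sum_nonzero[OF g that] .
  have "\<bar>real_of_int k\<bar> \<le> (\<Sum>i<n. \<bar>real_of_int (g i)\<bar>)"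
    using g by (simp add: nonzero_tuples_sum_def flip: of_int_sum) (metis of_int_abs of_int_le_iff sum_abs of_int_sum)
  then have "\<bar>real_of_int k\<bar> powr (s+1) \<le> Cs s n * (\<Sum>i<n. \<bar>real_of_int (g i)\<bar> powr (s+1))"
    using s n k gnz by (intro powr_le_Cs_sum_powr) auto
  then have "\<bar>real_of_int k\<bar> powr (s+1) * (\<Prod>j<n. c j (g j))
      \<le> Cs s n * (\<Sum>i<n. \<bar>real_of_int (g i)\<bar> powr (s+1)) * (\<Prod>j<n. c j (g j))"
    by (rule mult_right_mono) (simp add: prod_nonneg c_def e)
  also have "\<dots> = Cs s n * (\<Sum>i<n. \<bar>real_of_int (g i)\<bar> powr (s+1) * (\<Prod>j<n. c j (g j)))"
    by (simp add: sum_distrib_right mult.assoc)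
  also have "(\<Sum>i<n. \<bar>real_of_int (g i)\<bar> powr (s+1) * (\<Prod>j<n. c j (g j)))
      = (\<Sum>i<n. e i (g i) * (\<Prod>j\<in>{..<n}-{i}. c j (g j)))"
  proof (rule sum.cong)
    fix i assume "i \<in> {..<n}"
    then have "\<bar>real_of_int (g i)\<bar> powr (s+1) * c i (g i) = e i (g i)"
      using gnz[of i] by (simp add: c_def mult.assoc[symmetric] flip: powr_add)
    then show "\<bar>real_of_int (g i)\<bar> powr (s+1) * (\<Prod>j<n. c j (g j)) = e i (g i) * (\<Prod>j\<in>{..<n}-{i}. c j (g j))"
      using \<open>i \<in> {..<n}\<close> by (simp add: prod.remove mult.assoc[symmetric])
  qed simp
  finally show ?thesis .
qed

lemma Young_Minkowski_nonzero_tuples: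
  fixes e c :: "nat \<Rightarrow> int \<Rightarrow> real"
  assumes p: "p \<ge> 1" and e: "\<And>j x. e j x \<ge> 0" and c: "\<And>j x. c j x \<ge> 0"
    and es: "\<And>j. j < n \<Longrightarrow> (\<lambda>x. e j x powr p) summable_on Zset"
    and cs: "\<And>j. j < n \<Longrightarrow> c j summable_on Zset"
  defines "T \<equiv> \<lambda>i k. \<Sum>\<^sub>\<infinity>g\<in>nonzero_tuples_sum n k. e i (g i) * (\<Prod>j\<in>{..<n}-{i}. c j (g j))"
  shows "(\<lambda>k. (\<Sum>i<n. T i k) powr p) summable_on UNIV \<and>
    (\<Sum>\<^sub>\<infinity>k. (\<Sum>i<n. T i k) powr p)
      \<le> (\<Sum>i<n. (\<Sum>\<^sub>\<infinity>x\<in>Zset. e i x powr p) powr (1/p) * (\<Prod>j\<in>{..<n}-{i}. infsum (c j) Zset)) powr p"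
proof (rule Minkowski_infsum[OF p])
  fix i assume i: "i \<in> {..<n}"
  have i: "i < n" using i by simp
  note Y = Young_nonzero_tuples[where e="e i" and c=c, OF p i e c es[OF i] cs]
  show "(\<lambda>k. T i k powr p) summable_on UNIV" using Y(2) by (simp add: T_def)
  have "(\<Sum>\<^sub>\<infinity>x\<in>Zset. e i x powr p) = ((\<Sum>\<^sub>\<infinity>x\<in>Zset. e i x powr p) powr (1/p)) powr p"
    using p by (simp add: powr_powr infsum_nonneg)
  then show "(\<Sum>\<^sub>\<infinity>k. T i k powr p)
      \<le> ((\<Sum>\<^sub>\<infinity>x\<in>Zset. e i x powr p) powr (1/p) * (\<Prod>j\<in>{..<n}-{i}. infsum (c j) Zset)) powr p"
    using Y(3) by (simp add: T_def powr_mult prod_nonneg infsum_nonneg c)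
qed (auto simp: T_def intro!: infsum_nonneg mult_nonneg_nonneg prod_nonneg e c)

lemma abs_powr_nonzero_convolution_le:
  fixes e :: "nat \<Rightarrow> int \<Rightarrow> real"
  assumes p: "p \<ge> 1" and s: "s \<ge> -1" and n: "n \<ge> 1" and k: "k \<noteq> 0" and e: "\<And>j x. e j x \<ge> 0"
    and es: "\<And>j. j < n \<Longrightarrow> (\<lambda>x. e j x powr p) summable_on Zset"
  defines "c \<equiv> \<lambda>j x. \<bar>real_of_int x\<bar> powr (-(s+1)) * e j x"
  assumes cs: "\<And>j. j < n \<Longrightarrow> c j summable_on Zset"
  shows "\<bar>real_of_int k\<bar> powr (s+1) * nonzero_convolution n c k
    \<le> Cs s n * (\<Sum>i<n. \<Sum>\<^sub>\<infinity>g\<in>nonzero_tuples_sum n k. e i (g i) * (\<Prod>j\<in>{..<n}-{i}. c j (g j)))"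
proof -
  have c: "c j x \<ge> 0" for j x by (simp add: c_def e)
  have Ws: "(\<lambda>g. e i (g i) * (\<Prod>j\<in>{..<n}-{i}. c j (g j))) summable_on nonzero_tuples_sum n k" if "i < n" for i
    by (rule Young_nonzero_tuples(1)[where e="e i"]) (use p that e c es cs in auto)
  have Wh: "((\<lambda>g. \<Sum>i<n. e i (g i) * (\<Prod>j\<in>{..<n}-{i}. c j (g j)))
      has_sum (\<Sum>i<n. \<Sum>\<^sub>\<infinity>g\<in>nonzero_tuples_sum n k. e i (g i) * (\<Prod>j\<in>{..<n}-{i}. c j (g j))))
      (nonzero_tuples_sum n k)"
    by (rule has_sum_finite_sum) (use Ws in \<open>auto simp: has_sum_infsum\<close>)
  have "\<bar>real_of_int k\<bar> powr (s+1) * nonzero_convolution n c k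
      = (\<Sum>\<^sub>\<infinity>g\<in>nonzero_tuples_sum n k. \<bar>real_of_int k\<bar> powr (s+1) * (\<Prod>j<n. c j (g j)))"
    by (simp add: nonzero_convolution_def infsum_cmult_right')
  also have "\<dots> \<le> (\<Sum>\<^sub>\<infinity>g\<in>nonzero_tuples_sum n k. Cs s n * (\<Sum>i<n. e i (g i) * (\<Prod>j\<in>{..<n}-{i}. c j (g j))))"
  proof (rule infsum_mono)
    show "(\<lambda>g. \<bar>real_of_int k\<bar> powr (s+1) * (\<Prod>j<n. c j (g j))) summable_on nonzero_tuples_sum n k"
      using c cs by (intro summable_on_cmult_right summable_on_nonzero_tuples_sum_prod)
    show "(\<lambda>g. Cs s n * (\<Sum>i<n. e i (g i) * (\<Prod>j\<in>{..<n}-{i}. c j (g j)))) summable_on nonzero_tuples_sum n k"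
      using has_sum_imp_summable[OF Wh] by (rule summable_on_cmult_right)
    show "\<bar>real_of_int k\<bar> powr (s+1) * (\<Prod>j<n. c j (g j))
        \<le> Cs s n * (\<Sum>i<n. e i (g i) * (\<Prod>j\<in>{..<n}-{i}. c j (g j)))"
      if "g \<in> nonzero_tuples_sum n k" for g
      using abs_powr_prod_le_Cs_sum[OF s n e that k] unfolding c_def .
  qed
  also have "\<dots> = Cs s n * (\<Sum>i<n. \<Sum>\<^sub>\<infinity>g\<in>nonzero_tuples_sum n k. e i (g i) * (\<Prod>j\<in>{..<n}-{i}. c j (g j)))"
    using Wh by (simp add: infsum_cmult_right' infsumI)
  finally show ?thesis .
qed

lemma nonzero_convolution_estimate:
  fixes e :: "nat \<Rightarrow> int \<Rightarrow> real"
  assumes sp: "(s > - 1 / p \<and> p > 1) \<or> (s \<ge> -1 \<and> p = 1)" and n: "n \<ge> 1"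
    and e: "\<And>j x. e j x \<ge> 0" and es: "\<And>j. j < n \<Longrightarrow> (\<lambda>x. e j x powr p) summable_on Zset"
  defines "c \<equiv> \<lambda>j x. \<bar>real_of_int x\<bar> powr (-(s+1)) * e j x"
  shows "(\<lambda>k. (\<bar>real_of_int k\<bar> powr (s+1) * nonzero_convolution n c k) powr p) summable_on Zset \<and>
    (\<Sum>\<^sub>\<infinity>k\<in>Zset. (\<bar>real_of_int k\<bar> powr (s+1) * nonzero_convolution n c k) powr p)
      \<le> (Cs s n * (real n * Zsp s p ^ (n - 1) * (\<Prod>j<n. (\<Sum>\<^sub>\<infinity>x\<in>Zset. e j x powr p) powr (1/p)))) powr p"
proof -
  note p = admissible_exponents(1)[OF sp] and s = admissible_exponents(2)[OF sp]
  define E where "E j = (\<Sum>\<^sub>\<infinity>x\<in>Zset. e j x powr p) powr (1/p)" for j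
  define T where "T i k = (\<Sum>\<^sub>\<infinity>g\<in>nonzero_tuples_sum n k. e i (g i) * (\<Prod>j\<in>{..<n}-{i}. c j (g j)))" for i k
  define R where "R = (\<Sum>i<n. E i * (\<Prod>j\<in>{..<n}-{i}. infsum (c j) Zset))"
  have c: "c j x \<ge> 0" for j x by (simp add: c_def e)
  have cs: "c j summable_on Zset" "infsum (c j) Zset \<le> Zsp s p * E j" if "j < n" for j
    using infsum_abs_powr_mult_le_Zsp[OF sp e es[OF that]] by (simp_all add: c_def E_def)
  have M: "(\<lambda>k. (\<Sum>i<n. T i k) powr p) summable_on UNIV \<and> (\<Sum>\<^sub>\<infinity>k. (\<Sum>i<n. T i k) powr p) \<le> R powr p"
    unfolding T_def R_def E_def by (rule Young_Minkowski_nonzero_tuples[OF p e c es cs(1)])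
  have "R \<ge> 0" unfolding R_def E_def by (intro sum_nonneg mult_nonneg_nonneg prod_nonneg infsum_nonneg c) auto
  have MZ: "(\<lambda>k. (\<Sum>i<n. T i k) powr p) summable_on Zset"
    using summable_on_subset_banach[of _ UNIV Zset] M by blast
  have "(\<lambda>k. (\<bar>real_of_int k\<bar> powr (s+1) * nonzero_convolution n c k) powr p) summable_on Zset \<and>
    (\<Sum>\<^sub>\<infinity>k\<in>Zset. (\<bar>real_of_int k\<bar> powr (s+1) * nonzero_convolution n c k) powr p) \<le> (Cs s n * R) powr p"
  proof (rule infsum_powr_le_by_comparison[OF _ _ _ MZ _ Cs_nonneg \<open>R \<ge> 0\<close>])
    show "(\<Sum>\<^sub>\<infinity>k\<in>Zset. (\<Sum>i<n. T i k) powr p) \<le> R powr p"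
      using infsum_mono2[OF MZ conjunct1[OF M]] conjunct2[OF M] by simp
    fix k assume "k \<in> Zset"
    then have "k \<noteq> 0" by (simp add: Zset_def)
    from abs_powr_nonzero_convolution_le[OF p s n this e es cs(1)[unfolded c_def]]
    show "\<bar>real_of_int k\<bar> powr (s+1) * nonzero_convolution n c k \<le> Cs s n * (\<Sum>i<n. T i k)"
      unfolding T_def c_def .
    show "0 \<le> \<bar>real_of_int k\<bar> powr (s+1) * nonzero_convolution n c k"
      unfolding nonzero_convolution_def by (intro mult_nonneg_nonneg infsum_nonneg prod_nonneg c) auto
  qed (use p in simp)
  moreover have "R \<le> real n * Zsp s p ^ (n - 1) * (\<Prod>j<n. E j)"
    unfolding R_def by (rule sum_prod_except_le) (use cs(2) in \<open>auto simp: E_def intro!: infsum_nonneg c\<close>)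
  then have "(Cs s n * R) powr p \<le> (Cs s n * (real n * Zsp s p ^ (n - 1) * (\<Prod>j<n. E j))) powr p"
    using p \<open>R \<ge> 0\<close> by (intro powr_mono2 mult_left_mono Cs_nonneg mult_nonneg_nonneg) auto
  ultimately show ?thesis by (simp add: E_def)
qed

section \<open>Fourier--Lebesgue norms\<close>

lemma FL_norm_nonneg: "FL_norm s p w \<ge> 0"
  by (simp add: FL_norm_def)

lemma FL_norm_powr:
  "p > 0 \<Longrightarrow> FL_norm s p w powr p = (\<Sum>\<^sub>\<infinity>k\<in>Zset. (\<bar>real_of_int k\<bar> powr s * cmod (w k)) powr p)"
  unfolding FL_norm_def by (simp add: powr_powr infsum_nonneg)

lemma FL_norm_le:
  assumes "p > 0" "(\<Sum>\<^sub>\<infinity>k\<in>Zset. (\<bar>real_of_int k\<bar> powr s * cmod (w k)) powr p) \<le> B powr p" "B \<ge> 0"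
  shows "FL_norm s p w \<le> B"
proof -
  have "FL_norm s p w \<le> (B powr p) powr (1/p)"
    unfolding FL_norm_def using assms by (intro powr_mono2) (auto intro: infsum_nonneg)
  also have "\<dots> = B" using assms by (simp add: powr_powr)
  finally show ?thesis .
qed

lemma in_FL0_diff:
  assumes p: "p \<ge> 0" and v: "in_FL0 s p v" and v': "in_FL0 s p v'"
  shows "in_FL0 s p (\<lambda>k. v k - v' k)"
proof -
  define a where "a w k = \<bar>real_of_int k\<bar> powr s * cmod (w k)" for w :: "int \<Rightarrow> complex" and k
  have "a (\<lambda>k. v k - v' k) k \<le> a v k + a v' k" for k
    unfolding a_def by (simp add: mult_left_mono norm_triangle_ineq4 flip: distrib_left)
  then have le: "a (\<lambda>k. v k - v' k) k powr p \<le> 2 powr p * (a v k powr p + a v' k powr p)" for k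
    using p by (intro order.trans[OF powr_mono2 powr_add_le_two_powr]) (auto simp: a_def)
  have "(\<lambda>k. 2 powr p * (a v k powr p + a v' k powr p)) summable_on Zset"
    using v v' by (intro summable_on_cmult_right summable_on_add) (auto simp: in_FL0_def a_def)
  then have "(\<lambda>k. a (\<lambda>k. v k - v' k) k powr p) summable_on Zset"
    by (rule summable_on_comparison_test) (use le in auto)
  then show ?thesis using v v' by (simp add: in_FL0_def a_def)
qed

lemma FL_norm_sum_le:
  fixes f :: "'i \<Rightarrow> int \<Rightarrow> complex"
  assumes p: "p \<ge> 1" and I: "finite I" and f: "\<And>i. i \<in> I \<Longrightarrow> in_FL0 s p (f i)"
  shows "FL_norm s p (\<lambda>k. \<Sum>i\<in>I. f i k) \<le> (\<Sum>i\<in>I. FL_norm s p (f i))"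
proof -
  define T where "T i k = \<bar>real_of_int k\<bar> powr s * cmod (f i k)" for i k
  have M: "(\<lambda>k. (\<Sum>i\<in>I. T i k) powr p) summable_on Zset \<and>
      (\<Sum>\<^sub>\<infinity>k\<in>Zset. (\<Sum>i\<in>I. T i k) powr p) \<le> (\<Sum>i\<in>I. FL_norm s p (f i)) powr p"
    using p f by (intro Minkowski_infsum[OF p I]) (auto simp: T_def FL_norm_nonneg FL_norm_powr in_FL0_def)
  have le: "\<bar>real_of_int k\<bar> powr s * cmod (\<Sum>i\<in>I. f i k) \<le> 1 * (\<Sum>i\<in>I. T i k)" for k
    unfolding T_def by (simp add: mult_left_mono norm_sum flip: sum_distrib_left)
  have "(\<Sum>\<^sub>\<infinity>k\<in>Zset. (\<bar>real_of_int k\<bar> powr s * cmod (\<Sum>i\<in>I. f i k)) powr p)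
      \<le> (1 * (\<Sum>i\<in>I. FL_norm s p (f i))) powr p"
    by (rule conjunct2[OF infsum_powr_le_by_comparison[OF _ _ le]])
      (use M p in \<open>auto intro: sum_nonneg FL_norm_nonneg\<close>)
  then show ?thesis using p by (intro FL_norm_le) (auto intro: sum_nonneg FL_norm_nonneg)
qed

lemma abs_powr_weight_cancel:
  "x \<noteq> 0 \<Longrightarrow> \<bar>real_of_int x\<bar> powr (- s - 1) * (\<bar>real_of_int x\<bar> powr s * a) = a / \<bar>real_of_int x\<bar>"
  by (simp add: mult.assoc[symmetric] powr_minus divide_inverse flip: powr_add)

section \<open>The multilinear form\<close>

definition NN_term :: "nat \<Rightarrow> real \<Rightarrow> (nat \<Rightarrow> int \<Rightarrow> complex) \<Rightarrow> int list \<Rightarrow> complex" where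
  "NN_term n t ws ks = exp (\<i> * of_real (of_int (Phi ks) * t)) * (\<Prod>j<n. ws j (ks ! j) / of_int (ks ! j))"

definition NN_multi :: "nat \<Rightarrow> real \<Rightarrow> (nat \<Rightarrow> int \<Rightarrow> complex) \<Rightarrow> int \<Rightarrow> complex" where
  "NN_multi n t ws k = (if k = 0 then 0 else
     ((-1) ^ n * of_int k / (2 ^ (n - 1) * fact n)) * (\<Sum>\<^sub>\<infinity>ks\<in>tuples n k. NN_term n t ws ks))"

lemma NN_eq_NN_multi: "NN n t w = NN_multi n t (\<lambda>_. w)"
  by (simp add: fun_eq_iff NN_def NN_multi_def NN_term_def)

lemma bij_betw_nonzero_tuples_sum_tuples:
  "bij_betw (\<lambda>g. map g [0..<n]) (nonzero_tuples_sum n k) (tuples n k)"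
proof (rule bij_betw_imageI)
  have sum_map: "sum_list (map g [0..<n]) = (\<Sum>i<n. g i)" for g :: "nat \<Rightarrow> int"
    by (simp add: sum_set_upt_conv_sum_list_nat[symmetric] atLeast0LessThan)
  show "inj_on (\<lambda>g. map g [0..<n]) (nonzero_tuples_sum n k)"
  proof (rule inj_onI)
    fix g g' assume g: "g \<in> nonzero_tuples_sum n k" and g': "g' \<in> nonzero_tuples_sum n k"
      and eq: "map g [0..<n] = map g' [0..<n]"
    have "g j = g' j" if "j < n" for j using arg_cong[OF eq, of "\<lambda>l. l ! j"] that by simp
    moreover have "g j = g' j" if "\<not> j < n" for j using g g' that
      by (auto simp: nonzero_tuples_sum_def nonzero_tuples_def PiE_def extensional_def)
    ultimately show "g = g'" by (metis ext)
  qed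
  show "(\<lambda>g. map g [0..<n]) ` nonzero_tuples_sum n k = tuples n k"
  proof (intro equalityI subsetI)
    fix l assume "l \<in> (\<lambda>g. map g [0..<n]) ` nonzero_tuples_sum n k"
    then show "l \<in> tuples n k"
      by (auto simp: tuples_def nonzero_tuples_sum_def nonzero_tuples_def PiE_def Pi_def Zset_def sum_map)
  next
    fix l assume l: "l \<in> tuples n k"
    define g where "g i = (if i < n then l ! i else undefined)" for i
    have "map g [0..<n] = l" using l by (auto simp: tuples_def g_def intro: nth_equalityI)
    moreover from this have "g \<in> nonzero_tuples_sum n k" using l sum_map[of g]
      by (auto simp: tuples_def nonzero_tuples_sum_def nonzero_tuples_def PiE_def Pi_def Zset_def g_def extensional_def)
    ultimately show "l \<in> (\<lambda>g. map g [0..<n]) ` nonzero_tuples_sum n k" by force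
  qed
qed

lemma NN_term_summable_and_norm_le:
  fixes ws :: "nat \<Rightarrow> int \<Rightarrow> complex"
  assumes "(\<lambda>g. \<Prod>j<n. cmod (ws j (g j)) / \<bar>real_of_int (g j)\<bar>) summable_on nonzero_tuples_sum n k"
  shows "NN_term n t ws summable_on tuples n k"
    and "norm (\<Sum>\<^sub>\<infinity>ks\<in>tuples n k. NN_term n t ws ks)
           \<le> (\<Sum>\<^sub>\<infinity>g\<in>nonzero_tuples_sum n k. \<Prod>j<n. cmod (ws j (g j)) / \<bar>real_of_int (g j)\<bar>)"
proof -
  define G where "G g = NN_term n t ws (map g [0..<n])" for g
  have nG: "norm (G g) = (\<Prod>j<n. cmod (ws j (g j)) / \<bar>real_of_int (g j)\<bar>)" for g
    by (simp add: G_def NN_term_def norm_mult prod_norm[symmetric] norm_divide)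
  have Gs: "G summable_on nonzero_tuples_sum n k"
    by (rule abs_summable_summable) (use assms in \<open>simp add: nG\<close>)
  then show "NN_term n t ws summable_on tuples n k"
    using summable_on_reindex_bij_betw[OF bij_betw_nonzero_tuples_sum_tuples, of "NN_term n t ws"]
    unfolding G_def[abs_def] by simp
  have "infsum G (nonzero_tuples_sum n k) = (\<Sum>\<^sub>\<infinity>ks\<in>tuples n k. NN_term n t ws ks)"
    unfolding G_def[abs_def] by (rule infsum_reindex_bij_betw[OF bij_betw_nonzero_tuples_sum_tuples])
  then have hs: "(G has_sum (\<Sum>\<^sub>\<infinity>ks\<in>tuples n k. NN_term n t ws ks)) (nonzero_tuples_sum n k)"
    using Gs by (metis has_sum_infsum)
  show "norm (\<Sum>\<^sub>\<infinity>ks\<in>tuples n k. NN_term n t ws ks)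
      \<le> (\<Sum>\<^sub>\<infinity>g\<in>nonzero_tuples_sum n k. \<Prod>j<n. cmod (ws j (g j)) / \<bar>real_of_int (g j)\<bar>)"
    by (rule norm_infsum_le[OF hs]) (use assms in \<open>auto simp: nG has_sum_infsum\<close>)
qed

lemma norm_NN_multi_le:
  fixes ws :: "nat \<Rightarrow> int \<Rightarrow> complex"
  assumes "(\<lambda>g. \<Prod>j<n. cmod (ws j (g j)) / \<bar>real_of_int (g j)\<bar>) summable_on nonzero_tuples_sum n k"
  shows "cmod (NN_multi n t ws k) \<le> \<bar>real_of_int k\<bar> / (2 ^ (n - 1) * fact n) *
           (\<Sum>\<^sub>\<infinity>g\<in>nonzero_tuples_sum n k. \<Prod>j<n. cmod (ws j (g j)) / \<bar>real_of_int (g j)\<bar>)"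
proof (cases "k = 0")
  case False
  have "cmod (NN_multi n t ws k) = \<bar>real_of_int k\<bar> / (2 ^ (n - 1) * fact n) * norm (\<Sum>\<^sub>\<infinity>ks\<in>tuples n k. NN_term n t ws ks)"
    using False by (simp add: NN_multi_def norm_mult norm_divide norm_power)
  also have "\<dots> \<le> \<bar>real_of_int k\<bar> / (2 ^ (n - 1) * fact n) *
      (\<Sum>\<^sub>\<infinity>g\<in>nonzero_tuples_sum n k. \<Prod>j<n. cmod (ws j (g j)) / \<bar>real_of_int (g j)\<bar>)"
    by (rule mult_left_mono[OF NN_term_summable_and_norm_le(2)[OF assms]]) simp
  finally show ?thesis .
qed (simp add: NN_multi_def infsum_nonneg prod_nonneg)

lemma weighted_prod_summable_on_nonzero_tuples_sum:
  assumes sp: "(s > - 1 / p \<and> p > 1) \<or> (s \<ge> -1 \<and> p = 1)"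
    and ws: "\<And>j. j < n \<Longrightarrow> in_FL0 s p (ws j)"
  shows "(\<lambda>g. \<Prod>j<n. cmod (ws j (g j)) / \<bar>real_of_int (g j)\<bar>) summable_on nonzero_tuples_sum n k"
proof -
  define c where "c j x = \<bar>real_of_int x\<bar> powr (-(s+1)) * (\<bar>real_of_int x\<bar> powr s * cmod (ws j x))" for j x
  have cs: "c j summable_on Zset" if "j < n" for j
    using infsum_abs_powr_mult_le_Zsp[OF sp _ ws[OF that, unfolded in_FL0_def, THEN conjunct2]]
    by (simp add: c_def[abs_def])
  have "(\<lambda>g. \<Prod>j<n. c j (g j)) summable_on nonzero_tuples_sum n k"
    by (rule summable_on_nonzero_tuples_sum_prod[OF _ cs]) (simp_all add: c_def)
  then show ?thesis
    by (rule summable_on_cong[THEN iffD1, rotated])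
      (auto simp: c_def abs_powr_weight_cancel nonzero_tuples_sum_nonzero intro!: prod.cong)
qed

lemma abs_powr_norm_NN_multi_le:
  assumes sp: "(s > - 1 / p \<and> p > 1) \<or> (s \<ge> -1 \<and> p = 1)"
    and ws: "\<And>j. j < n \<Longrightarrow> in_FL0 s p (ws j)" and k: "k \<noteq> 0"
  defines "c \<equiv> \<lambda>j x. \<bar>real_of_int x\<bar> powr (-(s+1)) * (\<bar>real_of_int x\<bar> powr s * cmod (ws j x))"
  shows "\<bar>real_of_int k\<bar> powr s * cmod (NN_multi n t ws k)
    \<le> 1 / (2 ^ (n - 1) * fact n) * (\<bar>real_of_int k\<bar> powr (s+1) * nonzero_convolution n c k)"
proof -
  define S where "S = (\<Sum>\<^sub>\<infinity>g\<in>nonzero_tuples_sum n k. \<Prod>j<n. cmod (ws j (g j)) / \<bar>real_of_int (g j)\<bar>)"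
  have "nonzero_convolution n c k = S"
    unfolding nonzero_convolution_def c_def S_def
    by (auto intro!: infsum_cong prod.cong simp: abs_powr_weight_cancel nonzero_tuples_sum_nonzero)
  then have "1 / (2 ^ (n - 1) * fact n) * (\<bar>real_of_int k\<bar> powr (s+1) * nonzero_convolution n c k)
      = \<bar>real_of_int k\<bar> powr s * (\<bar>real_of_int k\<bar> / (2 ^ (n - 1) * fact n) * S)"
    using k by (simp add: powr_add field_simps)
  moreover have "\<bar>real_of_int k\<bar> powr s * cmod (NN_multi n t ws k)
      \<le> \<bar>real_of_int k\<bar> powr s * (\<bar>real_of_int k\<bar> / (2 ^ (n - 1) * fact n) * S)"
    unfolding S_def
    by (rule mult_left_mono[OF norm_NN_multi_le[OF weighted_prod_summable_on_nonzero_tuples_sum[OF sp ws]] powr_ge_zero])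
  ultimately show ?thesis by simp
qed

lemma NN_multi_estimate:
  assumes sp: "(s > - 1 / p \<and> p > 1) \<or> (s \<ge> -1 \<and> p = 1)" and n: "n \<ge> 1"
    and ws: "\<And>j. j < n \<Longrightarrow> in_FL0 s p (ws j)"
  shows "in_FL0 s p (NN_multi n t ws) \<and>
    FL_norm s p (NN_multi n t ws)
      \<le> Cs s n * Zsp s p ^ (n - 1) / (2 ^ (n - 1) * fact (n - 1)) * (\<Prod>j<n. FL_norm s p (ws j))"
proof -
  note p = admissible_exponents(1)[OF sp] and s = admissible_exponents(2)[OF sp]
  define c where "c = (\<lambda>j x. \<bar>real_of_int x\<bar> powr (-(s+1)) * (\<bar>real_of_int x\<bar> powr s * cmod (ws j x)))"
  define K :: real where "K = 1 / (2 ^ (n - 1) * fact n)"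
  define R where "R = Cs s n * (real n * Zsp s p ^ (n - 1) * (\<Prod>j<n. FL_norm s p (ws j)))"
  have R: "R \<ge> 0"
    unfolding R_def using Zsp_nonneg[OF s]
    by (intro mult_nonneg_nonneg prod_nonneg Cs_nonneg FL_norm_nonneg zero_le_power) auto
  have conv: "(\<lambda>k. (\<bar>real_of_int k\<bar> powr (s+1) * nonzero_convolution n c k) powr p) summable_on Zset \<and>
      (\<Sum>\<^sub>\<infinity>k\<in>Zset. (\<bar>real_of_int k\<bar> powr (s+1) * nonzero_convolution n c k) powr p) \<le> R powr p"
    unfolding c_def R_def FL_norm_def
    using ws by (intro nonzero_convolution_estimate[OF sp n]) (auto simp: in_FL0_def)
  have "(\<lambda>k. (\<bar>real_of_int k\<bar> powr s * cmod (NN_multi n t ws k)) powr p) summable_on Zset \<and>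
      (\<Sum>\<^sub>\<infinity>k\<in>Zset. (\<bar>real_of_int k\<bar> powr s * cmod (NN_multi n t ws k)) powr p) \<le> (K * R) powr p"
    by (rule infsum_powr_le_by_comparison[OF _ _ _ conjunct1[OF conv] conjunct2[OF conv]])
      (use p R abs_powr_norm_NN_multi_le[OF sp ws] in \<open>auto simp: K_def c_def Zset_def\<close>)
  moreover have "K * R \<ge> 0" using R by (simp add: K_def)
  moreover have "K * R = Cs s n * Zsp s p ^ (n - 1) / (2 ^ (n - 1) * fact (n - 1)) * (\<Prod>j<n. FL_norm s p (ws j))"
    using n by (simp add: K_def R_def fact_reduce[of n] field_simps)
  ultimately show ?thesis
    using p FL_norm_le[of p s "NN_multi n t ws" "K * R"] by (simp add: in_FL0_def NN_multi_def)
qed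

lemma prod_diff_telescope:
  fixes x y :: "nat \<Rightarrow> 'a::comm_ring_1"
  shows "(\<Prod>j<n. x j) - (\<Prod>j<n. y j)
    = (\<Sum>m<n. \<Prod>j<n. if j < m then y j else if j = m then x j - y j else x j)"
proof (induction n)
  case (Suc n)
  define F where "F m j = (if j < m then y j else if j = m then x j - y j else x j)" for m j
  have "(\<Prod>j<n. F n j) = (\<Prod>j<n. y j)" by (rule prod.cong) (auto simp: F_def)
  then have "(\<Sum>m<Suc n. \<Prod>j<Suc n. F m j) = (\<Sum>m<n. (\<Prod>j<n. F m j) * x n) + (\<Prod>j<n. y j) * (x n - y n)"
    by (simp add: F_def)
  also have "\<dots> = ((\<Prod>j<n. x j) - (\<Prod>j<n. y j)) * x n + (\<Prod>j<n. y j) * (x n - y n)"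
    using Suc.IH by (simp add: F_def sum_distrib_right)
  also have "\<dots> = (\<Prod>j<Suc n. x j) - (\<Prod>j<Suc n. y j)" by (simp add: algebra_simps)
  finally show ?case by (simp add: F_def)
qed simp

definition telescope_factors :: "(int \<Rightarrow> complex) \<Rightarrow> (int \<Rightarrow> complex) \<Rightarrow> nat \<Rightarrow> nat \<Rightarrow> int \<Rightarrow> complex" where
  "telescope_factors v v' m j = (if j < m then v' else if j = m then (\<lambda>k. v k - v' k) else v)"

lemma NN_term_diff:
  "NN_term n t (\<lambda>_. v) ks - NN_term n t (\<lambda>_. v') ks = (\<Sum>m<n. NN_term n t (telescope_factors v v' m) ks)"
proof -
  have "(\<Prod>j<n. v (ks ! j) / of_int (ks ! j)) - (\<Prod>j<n. v' (ks ! j) / of_int (ks ! j))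
      = (\<Sum>m<n. \<Prod>j<n. telescope_factors v v' m j (ks ! j) / of_int (ks ! j))"
    by (subst prod_diff_telescope) (auto intro!: sum.cong prod.cong simp: telescope_factors_def diff_divide_distrib)
  then show ?thesis by (simp add: NN_term_def sum_distrib_left flip: right_diff_distrib)
qed

lemma NN_diff_eq_sum_NN_multi:
  assumes "NN_term n t (\<lambda>_. v) summable_on tuples n k" "NN_term n t (\<lambda>_. v') summable_on tuples n k"
    and "\<And>m. m < n \<Longrightarrow> NN_term n t (telescope_factors v v' m) summable_on tuples n k"
  shows "NN n t v k - NN n t v' k = (\<Sum>m<n. NN_multi n t (telescope_factors v v' m) k)"
proof -
  have "((\<lambda>ks. NN_term n t (\<lambda>_. v) ks - NN_term n t (\<lambda>_. v') ks)
      has_sum (infsum (NN_term n t (\<lambda>_. v)) (tuples n k) - infsum (NN_term n t (\<lambda>_. v')) (tuples n k))) (tuples n k)"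
    using has_sum_add[OF has_sum_infsum[OF assms(1)] has_sum_uminusI[OF has_sum_infsum[OF assms(2)]]] by simp
  then have "infsum (NN_term n t (\<lambda>_. v)) (tuples n k) - infsum (NN_term n t (\<lambda>_. v')) (tuples n k)
      = (\<Sum>\<^sub>\<infinity>ks\<in>tuples n k. \<Sum>m<n. NN_term n t (telescope_factors v v' m) ks)"
    by (simp add: NN_term_diff infsumI)
  also have "\<dots> = (\<Sum>m<n. infsum (NN_term n t (telescope_factors v v' m)) (tuples n k))"
    using has_sum_finite_sum[of "{..<n}", OF _ has_sum_infsum[OF assms(3)]] by (simp add: infsumI)
  moreover define a :: complex where "a = (-1) ^ n * of_int k / (2 ^ (n - 1) * fact n)"
  then have "NN_multi n t ws k = (if k = 0 then 0 else a * infsum (NN_term n t ws) (tuples n k))" for ws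
    by (simp add: NN_multi_def)
  ultimately show ?thesis by (simp add: NN_eq_NN_multi sum_distrib_left flip: right_diff_distrib)
qed

lemma prod_FL_norm_telescope_factors_le:
  assumes "m < n"
  shows "(\<Prod>j<n. FL_norm s p (telescope_factors v v' m j))
    \<le> (FL_norm s p v + FL_norm s p v') ^ (n - 1) * FL_norm s p (\<lambda>k. v k - v' k)"
proof -
  have "(\<Prod>j<n. FL_norm s p (telescope_factors v v' m j))
      = FL_norm s p (\<lambda>k. v k - v' k) * (\<Prod>j\<in>{..<n}-{m}. FL_norm s p (telescope_factors v v' m j))"
    using assms by (simp add: prod.remove telescope_factors_def)
  also have "\<dots> \<le> FL_norm s p (\<lambda>k. v k - v' k) * (\<Prod>j\<in>{..<n}-{m}. FL_norm s p v + FL_norm s p v')"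
    by (intro mult_left_mono prod_mono)
      (auto simp: telescope_factors_def FL_norm_nonneg add_increasing add_increasing2)
  finally show ?thesis using assms by (simp add: mult.commute)
qed

lemma FL_norm_NN_diff_le:
  assumes sp: "(s > - 1 / p \<and> p > 1) \<or> (s \<ge> -1 \<and> p = 1)" and n: "n \<ge> 1"
    and v: "in_FL0 s p v" and v': "in_FL0 s p v'"
  shows "FL_norm s p (\<lambda>k. NN n t v k - NN n t v' k) \<le>
    Cs s n * (real n * Zsp s p ^ (n - 1)) / (2 ^ (n - 1) * fact (n - 1)) *
    (FL_norm s p v + FL_norm s p v') ^ (n - 1) * FL_norm s p (\<lambda>k. v k - v' k)"
proof -
  note p = admissible_exponents(1)[OF sp]
  define C where "C = Cs s n * Zsp s p ^ (n - 1) / (2 ^ (n - 1) * fact (n - 1))"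
  have "C \<ge> 0" using Zsp_nonneg[OF admissible_exponents(2)[OF sp]] by (simp add: C_def Cs_nonneg)
  have factors: "in_FL0 s p (telescope_factors v v' m j)" for m j
    using v v' in_FL0_diff[OF _ v v'] p by (simp add: telescope_factors_def)
  have "(\<lambda>k. NN n t v k - NN n t v' k) = (\<lambda>k. \<Sum>m<n. NN_multi n t (telescope_factors v v' m) k)"
    using v v' factors
    by (intro ext NN_diff_eq_sum_NN_multi NN_term_summable_and_norm_le(1) weighted_prod_summable_on_nonzero_tuples_sum[OF sp])
  then have "FL_norm s p (\<lambda>k. NN n t v k - NN n t v' k) \<le> (\<Sum>m<n. FL_norm s p (NN_multi n t (telescope_factors v v' m)))"
    using FL_norm_sum_le[OF p, of "{..<n}"] NN_multi_estimate[OF sp n factors] by simp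
  also have "\<dots> \<le> (\<Sum>m<n. C * ((FL_norm s p v + FL_norm s p v') ^ (n - 1) * FL_norm s p (\<lambda>k. v k - v' k)))"
  proof (rule sum_mono)
    fix m assume "m \<in> {..<n}"
    have "FL_norm s p (NN_multi n t (telescope_factors v v' m)) \<le> C * (\<Prod>j<n. FL_norm s p (telescope_factors v v' m j))"
      using NN_multi_estimate[OF sp n factors] by (simp add: C_def)
    also have "\<dots> \<le> C * ((FL_norm s p v + FL_norm s p v') ^ (n - 1) * FL_norm s p (\<lambda>k. v k - v' k))"
      using prod_FL_norm_telescope_factors_le \<open>m \<in> {..<n}\<close> \<open>C \<ge> 0\<close> by (intro mult_left_mono) auto
    finally show "FL_norm s p (NN_multi n t (telescope_factors v v' m))
        \<le> C * ((FL_norm s p v + FL_norm s p v') ^ (n - 1) * FL_norm s p (\<lambda>k. v k - v' k))" .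
  qed
  also have "\<dots> = Cs s n * (real n * Zsp s p ^ (n - 1)) / (2 ^ (n - 1) * fact (n - 1)) *
      (FL_norm s p v + FL_norm s p v') ^ (n - 1) * FL_norm s p (\<lambda>k. v k - v' k)"
    by (simp add: C_def)
  finally show ?thesis .
qed

theorem lemma2p7:
  fixes s p t :: real and n :: nat and v v' :: "int \<Rightarrow> complex"
  assumes sp: "(s > - 1 / p \<and> p > 1) \<or> (s \<ge> -1 \<and> p = 1)"
    and n: "n \<ge> 2"
    and v: "in_FL0 s p v" and v': "in_FL0 s p v'"
  shows "in_FL0 s p (NN n t v) \<and>
         FL_norm s p (NN n t v) \<le>
           Cs s n * Zsp s p ^ (n - 1) / (2 ^ (n - 1) * fact (n - 1)) * FL_norm s p v ^ n \<and>
         FL_norm s p (\<lambda>k. NN n t v k - NN n t v' k) \<le>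
           Cs s n * (real n * Zsp s p ^ (n - 1)) / (2 ^ (n - 1) * fact (n - 1)) *
           (FL_norm s p v + FL_norm s p v') ^ (n - 1) * FL_norm s p (\<lambda>k. v k - v' k)"
proof -
  have n: "n \<ge> 1" using n by simp
  show ?thesis
    using NN_multi_estimate[OF sp n, of "\<lambda>_. v" t] FL_norm_NN_diff_le[OF sp n v v', of t] v
    by (simp add: NN_eq_NN_multi)
qed

end
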